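(* Let $\mathcal{P}$ be a profile of unrooted phylogenetic trees whose display graph $G(\mathcal{P})$ is connected, let $S$ be an agreement supertree of $\mathcal{P}$, and let $\Psi$ be the cut function of $S$. Then (i) for every edge $e\in E(S)$, $\Psi(e)$ is a cut of $G(\mathcal{P})$; and (ii) for every edge $e\in E(S)$, $\Psi(e)$ is a minimal cut of $G(\mathcal{P})$ if and only if $G(\mathcal{P})-\Psi(e)$ has exactly two connected components.
   Context: A phylogenetic tree $T$ is an unrooted tree whose leaves are bijectively labeled by $\mathcal{L}(T)$ (leaves identified with labels; internal vertices have degree at least three). A profile $\mathcal{P}=\{T_1,\dots,T_k\}$ is a finite collection of phylogenetic trees (input trees), $\mathcal{L}(\mathcal{P})=\bigcup_i\mathcal{L}(T_i)$; internal vertices of distinct trees are disjoint, while leaves with the same label are the same vertex. The display graph $G(\mathcal{P})$ has vertex set $\bigcup_i V(T_i)$ and edge set $\bigcup_i E(T_i)$. For phylogenetic trees $S,T$ with $\mathcal{L}(T)\subseteq\mathcal{L}(S)$, $S_{|\mathcal{L}(T)}$ is obtained from the minimal subtree of $S$ connecting the leaves in $\mathcal{L}(T)$ by suppressing degree-two vertices; $S$ and $T$ agree if $S_{|\mathcal{L}(T)}$ is label-preservingly isomorphic to $T$. An agreement supertree of $\mathcal{P}$ is a phylogenetic tree with label set $\mathcal{L}(\mathcal{P})$ agreeing with every tree of $\mathcal{P}$. Cut function: for an agreement supertree $S$ and an edge $e=\{u,v\}$ of $S$, let $L_u$, $L_v$ be the label sets of the subtrees of $S-e$ containing $u$ and $v$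 respectively. For an input tree $T$ with $\mathcal{L}(T)\cap L_u\neq\emptyset$ and $\mathcal{L}(T)\cap L_v\neq\emptyset$, there is a unique edge $f$ of $T$ whose deletion separates $\mathcal{L}(T)$ into $\mathcal{L}(T)\cap L_u$ and $\mathcal{L}(T)\cap L_v$; $e$ is called the agreement edge of $S$ corresponding to $f$. The cut function $\Psi$ maps each $e\in E(S)$ to the set $\Psi(e)$ of all edges $f$ of input trees such that $e$ is the agreement edge corresponding to $f$ (input trees whose labels lie entirely in $L_u$ or entirely in $L_v$ contribute no edge). A cut of a connected graph $G$ is $F\subseteq E(G)$ with $G-F$ (same vertices, edges of $F$ removed) disconnected; minimal if no proper subset is a cut. *)

theory Defs
  imports Main
begin

text \<open>Graphs are given by a vertex set and a set of edges, each edge a two-element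
set of vertices. A tree is a pair (V, E). Leaves are identified with labels.\<close>

type_synonym 'v graph = "'v set \<times> 'v set set"

definition is_path :: "'v set set \<Rightarrow> 'v list \<Rightarrow> 'v \<Rightarrow> 'v \<Rightarrow> bool" where
  "is_path E p a b \<longleftrightarrow> p \<noteq> [] \<and> hd p = a \<and> last p = b \<and> distinct p \<and>
     (\<forall>i. Suc i < length p \<longrightarrow> {p ! i, p ! Suc i} \<in> E)"

definition is_cycle :: "'v set set \<Rightarrow> 'v list \<Rightarrow> bool" where
  "is_cycle E p \<longleftrightarrow> length p \<ge> 3 \<and> is_path E p (hd p) (last p) \<and> {last p, hd p} \<in> E"

definition reach :: "'v set set \<Rightarrow> 'v \<Rightarrow> 'v \<Rightarrow> bool" where
  "reach E x y \<longleftrightarrow> (x, y) \<in> {(a, b). {a, b} \<in> E}\<^sup>*"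

definition wf_graph :: "'v set \<Rightarrow> 'v set set \<Rightarrow> bool" where
  "wf_graph V E \<longleftrightarrow> (\<forall>e\<in>E. \<exists>a b. e = {a, b} \<and> a \<noteq> b \<and> a \<in> V \<and> b \<in> V)"

definition connected_graph :: "'v set \<Rightarrow> 'v set set \<Rightarrow> bool" where
  "connected_graph V E \<longleftrightarrow> V \<noteq> {} \<and> (\<forall>x\<in>V. \<forall>y\<in>V. reach E x y)"

definition components :: "'v set \<Rightarrow> 'v set set \<Rightarrow> 'v set set" where
  "components V E = {{y \<in> V. reach E x y} | x. x \<in> V}"

definition degree :: "'v set set \<Rightarrow> 'v \<Rightarrow> nat" where
  "degree E v = card {e \<in> E. v \<in> e}"

definition is_tree :: "'v set \<Rightarrow> 'v set set \<Rightarrow> bool" where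
  "is_tree V E \<longleftrightarrow> finite V \<and> wf_graph V E \<and> connected_graph V E \<and> (\<nexists>p. is_cycle E p)"

definition leaves :: "'v graph \<Rightarrow> 'v set" where
  "leaves T = {v \<in> fst T. degree (snd T) v \<le> 1}"

definition phylo_tree :: "'v graph \<Rightarrow> bool" where
  "phylo_tree T \<longleftrightarrow> is_tree (fst T) (snd T) \<and>
     (\<forall>v\<in>fst T. v \<notin> leaves T \<longrightarrow> degree (snd T) v \<ge> 3)"

definition profile :: "'v graph set \<Rightarrow> bool" where
  "profile P \<longleftrightarrow> finite P \<and> (\<forall>T\<in>P. phylo_tree T) \<and>
     (\<forall>T1\<in>P. \<forall>T2\<in>P. T1 \<noteq> T2 \<longrightarrow> fst T1 \<inter> fst T2 \<subseteq> leaves T1 \<inter> leaves T2)"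

definition labels :: "'v graph set \<Rightarrow> 'v set" where
  "labels P = (\<Union>T\<in>P. leaves T)"

definition dg_V :: "'v graph set \<Rightarrow> 'v set" where
  "dg_V P = (\<Union>T\<in>P. fst T)"

definition dg_E :: "'v graph set \<Rightarrow> 'v set set" where
  "dg_E P = (\<Union>T\<in>P. snd T)"

definition min_sub_V :: "'v graph \<Rightarrow> 'v set \<Rightarrow> 'v set" where
  "min_sub_V S X = {w. \<exists>a\<in>X. \<exists>b\<in>X. \<exists>p. is_path (snd S) p a b \<and> w \<in> set p}"

definition min_sub_E :: "'v graph \<Rightarrow> 'v set \<Rightarrow> 'v set set" where
  "min_sub_E S X = {e. \<exists>a\<in>X. \<exists>b\<in>X. \<exists>p. is_path (snd S) p a b \<and>
      (\<exists>i. Suc i < length p \<and> e = {p ! i, p ! Suc i})}"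

text \<open>Restriction S|X: minimal subtree with degree-two vertices suppressed.\<close>
definition restrict_V :: "'v graph \<Rightarrow> 'v set \<Rightarrow> 'v set" where
  "restrict_V S X = {w \<in> min_sub_V S X. degree (min_sub_E S X) w \<noteq> 2}"

definition restrict_E :: "'v graph \<Rightarrow> 'v set \<Rightarrow> 'v set set" where
  "restrict_E S X = {{a, b} | a b. a \<in> restrict_V S X \<and> b \<in> restrict_V S X \<and> a \<noteq> b \<and>
      (\<exists>p. is_path (min_sub_E S X) p a b \<and>
           (\<forall>w\<in>set p. w \<noteq> a \<and> w \<noteq> b \<longrightarrow> degree (min_sub_E S X) w = 2))}"

definition agrees :: "'v graph \<Rightarrow> 'v graph \<Rightarrow> bool" where
  "agrees S T \<longleftrightarrow> leaves T \<subseteq> leaves S \<and>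
     (\<exists>\<phi>. bij_betw \<phi> (restrict_V S (leaves T)) (fst T) \<and> (\<forall>x\<in>leaves T. \<phi> x = x) \<and>
        (\<forall>a\<in>restrict_V S (leaves T). \<forall>b\<in>restrict_V S (leaves T).
            {a, b} \<in> restrict_E S (leaves T) \<longleftrightarrow> {\<phi> a, \<phi> b} \<in> snd T))"

definition agreement_supertree :: "'v graph set \<Rightarrow> 'v graph \<Rightarrow> bool" where
  "agreement_supertree P S \<longleftrightarrow> phylo_tree S \<and> leaves S = labels P \<and> (\<forall>T\<in>P. agrees S T)"

definition side_labels :: "'v graph \<Rightarrow> 'v set \<Rightarrow> 'v \<Rightarrow> 'v set" where
  "side_labels T e x = {y \<in> leaves T. reach (snd T - {e}) x y}"

definition Psi :: "'v graph set \<Rightarrow> 'v graph \<Rightarrow> 'v set \<Rightarrow> 'v set set" where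
  "Psi P S e = {f. \<exists>T\<in>P. f \<in> snd T \<and> (\<exists>u v a b. e = {u, v} \<and> f = {a, b} \<and>
      leaves T \<inter> side_labels S e u \<noteq> {} \<and> leaves T \<inter> side_labels S e v \<noteq> {} \<and>
      side_labels T f a = leaves T \<inter> side_labels S e u \<and>
      side_labels T f b = leaves T \<inter> side_labels S e v)}"

definition is_cut :: "'v set \<Rightarrow> 'v set set \<Rightarrow> 'v set set \<Rightarrow> bool" where
  "is_cut V E F \<longleftrightarrow> F \<subseteq> E \<and> \<not> connected_graph V (E - F)"

definition is_min_cut :: "'v set \<Rightarrow> 'v set set \<Rightarrow> 'v set set \<Rightarrow> bool" where
  "is_min_cut V E F \<longleftrightarrow> is_cut V E F \<and> (\<forall>F'. F' \<subset> F \<longrightarrow> \<not> is_cut V E F')"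

end

theory Submission
  imports Defs
begin

text \<open>
  Fix an edge \<open>e = {u, v}\<close> of \<open>S\<close> and let \<open>Lu\<close>, \<open>Lv\<close> be the labels on the two sides of
  \<open>S - e\<close>. Take an input tree \<open>T\<close> with labels on both sides. An edge of the restriction
  \<open>S|L(T)\<close> whose ends are separated by \<open>e\<close> stands for a path of the minimal subtree through
  \<open>e\<close> whose inner vertices have degree two; leaving \<open>e\<close> in either direction such a path is
  forced, so there is exactly one such edge. The agreement isomorphism maps it to an edge of
  \<open>T\<close> splitting \<open>L(T)\<close> into \<open>L(T) \<inter> Lu\<close> and \<open>L(T) \<inter> Lv\<close>, and no other edge of \<open>T\<close> induces
  this split.

  Let \<open>A\<close> (\<open>u_part\<close> below) be the set of vertices that reach a label of \<open>Lu\<close> inside their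
  input tree with \<open>\<Psi>(e)\<close> deleted. Then \<open>\<Psi>(e)\<close> is exactly the set of edges of the display
  graph with one end in \<open>A\<close> and one outside, and both \<open>A\<close> and its complement contain labels.
  The edge boundary of a proper vertex set is a cut, and it is minimal exactly when both of its
  sides stay connected, that is, when deleting it leaves two components.
\<close>

section \<open>Reachability and simple paths\<close>

lemma reach_refl [simp]: "reach E x x"
  by (simp add: reach_def)

lemma reach_edge: "{a, b} \<in> E \<Longrightarrow> reach E a b"
  unfolding reach_def by (rule r_into_rtrancl) simp

lemma reach_trans: "reach E a b \<Longrightarrow> reach E b c \<Longrightarrow> reach E a c"
  unfolding reach_def by (rule rtrancl_trans)

lemma reach_step: "reach E a b \<Longrightarrow> {b, c} \<in> E \<Longrightarrow> reach E a c"
  using reach_trans reach_edge by metis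

lemma reach_sym: "reach E a b \<Longrightarrow> reach E b a"
  unfolding reach_def
proof (induct rule: rtrancl_induct)
  case (step y z)
  then have "(z, y) \<in> {(a, b). {a, b} \<in> E}" by (simp add: insert_commute)
  then show ?case using step(3) by (rule converse_rtrancl_into_rtrancl)
qed simp

lemma reach_induct [consumes 1, case_names base step]:
  assumes "reach E a b" "P a" "\<And>y z. reach E a y \<Longrightarrow> {y, z} \<in> E \<Longrightarrow> P y \<Longrightarrow> P z"
  shows "P b"
  using assms(1) unfolding reach_def
proof (induct rule: rtrancl_induct)
  case (step y z) then show ?case using assms(3)[of y z] by (auto simp: reach_def)
qed (use assms(2) in simp)

lemma reach_mono: "reach E a b \<Longrightarrow> E \<subseteq> E' \<Longrightarrow> reach E' a b"
  by (induct rule: reach_induct) (auto intro: reach_step)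

lemma reach_if_edges_reach:
  assumes "\<And>c d. {c, d} \<in> E \<Longrightarrow> reach E' c d" "reach E s t"
  shows "reach E' s t"
  using assms(2) by (induct rule: reach_induct) (auto intro: reach_trans assms(1))

lemma reach_removed_edge_cases:
  assumes "reach E s z" "E \<subseteq> E' \<union> {{a, b}}"
  shows "reach E' s z \<or> reach E' s a \<or> reach E' s b"
  using assms(1)
proof (induct rule: reach_induct)
  case (step y z)
  show ?case
  proof (cases "{y, z} = {a, b}")
    case True
    then have "y = a \<or> y = b" "z = a \<or> z = b" by (auto simp: doubleton_eq_iff)
    with step(3) show ?thesis by auto
  next
    case False
    then have "{y, z} \<in> E'" using step(2) assms(2) by auto
    with step(3) show ?thesis using reach_step by metis
  qed
qed simp

lemma reach_closed_set_iff:
  assumes closed: "\<And>w w'. {w, w'} \<in> E \<Longrightarrow> w \<in> A \<Longrightarrow> w' \<in> A" and "reach E s t"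
  shows "s \<in> A \<longleftrightarrow> t \<in> A"
proof -
  have "t \<in> A" if "reach E s t" "s \<in> A" for s t
    using that by (induct rule: reach_induct) (use closed in blast)+
  then show ?thesis using assms(2) reach_sym by metis
qed

lemma wf_graph_edgeE:
  assumes "wf_graph V E" "g \<in> E"
  obtains a b where "g = {a, b}" "a \<noteq> b" "a \<in> V" "b \<in> V"
  using assms unfolding wf_graph_def by blast

lemma wf_graph_edgeD: "wf_graph V E \<Longrightarrow> {a, b} \<in> E \<Longrightarrow> a \<noteq> b \<and> a \<in> V \<and> b \<in> V"
  unfolding wf_graph_def by (metis doubleton_eq_iff)

lemma wf_graph_edge_other:
  assumes "wf_graph V E" "g \<in> E" "t \<in> g"
  obtains z where "g = {t, z}" "z \<noteq> t"
  using assms by (elim wf_graph_edgeE) (auto simp: insert_commute)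

lemma wf_graph_finite_edges: "wf_graph V E \<Longrightarrow> finite V \<Longrightarrow> finite E"
  unfolding wf_graph_def by (rule finite_subset[of _ "Pow V"]) auto

lemma wf_graph_mono: "wf_graph V E \<Longrightarrow> E' \<subseteq> E \<Longrightarrow> wf_graph V E'"
  unfolding wf_graph_def by blast

lemma reach_in_vertices:
  assumes "wf_graph V E" "reach E a b" "a \<in> V"
  shows "b \<in> V"
  using assms(2) by (induct rule: reach_induct) (auto dest: wf_graph_edgeD[OF assms(1)] simp: assms(3))

lemma reach_bij_betw_iff:
  assumes bij: "bij_betw \<phi> V W" and wV: "wf_graph V EV" and wW: "wf_graph W EW"
    and edges: "\<forall>a\<in>V. \<forall>b\<in>V. {a, b} \<in> EV \<longleftrightarrow> {\<phi> a, \<phi> b} \<in> EW" and ab: "a \<in> V" "b \<in> V"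
  shows "reach EV a b \<longleftrightarrow> reach EW (\<phi> a) (\<phi> b)"
proof
  assume "reach EV a b"
  then show "reach EW (\<phi> a) (\<phi> b)"
  proof (induct rule: reach_induct)
    case (step y z)
    then have "{\<phi> y, \<phi> z} \<in> EW" using edges wf_graph_edgeD[OF wV] by blast
    then show ?case using step reach_step by metis
  qed simp
next
  assume "reach EW (\<phi> a) (\<phi> b)"
  then have "\<exists>z\<in>V. \<phi> b = \<phi> z \<and> reach EV a z"
  proof (induct rule: reach_induct)
    case (step y' z')
    then obtain y where y: "y \<in> V" "y' = \<phi> y" "reach EV a y" by blast
    obtain z where z: "z \<in> V" "z' = \<phi> z"
      using wf_graph_edgeD[OF wW step(2)] bij unfolding bij_betw_def by blast
    then have "{y, z} \<in> EV" using edges y step by blast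
    then show ?case using y z reach_step by metis
  qed (use ab in auto)
  then show "reach EV a b" using bij ab unfolding bij_betw_def inj_on_def by metis
qed

definition simple_path :: "'v set set \<Rightarrow> 'v list \<Rightarrow> bool" where
  "simple_path E p \<longleftrightarrow> p \<noteq> [] \<and> distinct p \<and> (\<forall>i. Suc i < length p \<longrightarrow> {p ! i, p ! Suc i} \<in> E)"

lemma is_path_iff_simple_path: "is_path E p a b \<longleftrightarrow> simple_path E p \<and> hd p = a \<and> last p = b"
  unfolding is_path_def simple_path_def by auto

lemma simple_path_mono: "simple_path E p \<Longrightarrow> E \<subseteq> E' \<Longrightarrow> simple_path E' p"
  unfolding simple_path_def by blast

lemma simple_path_edge: "simple_path E p \<Longrightarrow> Suc i < length p \<Longrightarrow> {p ! i, p ! Suc i} \<in> E"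
  unfolding simple_path_def by blast

lemma simple_path_reach: "simple_path E p \<Longrightarrow> reach E (hd p) (last p)"
proof (induct p rule: induct_list012)
  case (3 x y q)
  have "simple_path E (y # q)" using 3(3) unfolding simple_path_def by fastforce
  moreover have "{x, y} \<in> E" using simple_path_edge[OF 3(3), of 0] by simp
  ultimately show ?case using 3(2) reach_edge reach_trans by fastforce
qed (simp_all add: simple_path_def)

lemma simple_path_rev: "simple_path E p \<Longrightarrow> simple_path E (rev p)"
  unfolding simple_path_def
proof (intro conjI allI impI)
  fix i assume p: "p \<noteq> [] \<and> distinct p \<and> (\<forall>i. Suc i < length p \<longrightarrow> {p ! i, p ! Suc i} \<in> E)"
    and i: "Suc i < length (rev p)"
  have "{p ! (length p - Suc (Suc i)), p ! Suc (length p - Suc (Suc i))} \<in> E" using p i by simp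
  moreover have "Suc (length p - Suc (Suc i)) = length p - Suc i" using i by simp
  ultimately show "{rev p ! i, rev p ! Suc i} \<in> E" using i by (simp add: rev_nth insert_commute)
qed auto

lemma simple_path_take: "simple_path E p \<Longrightarrow> 0 < n \<Longrightarrow> simple_path E (take n p)"
  unfolding simple_path_def by auto

lemma simple_path_drop: "simple_path E p \<Longrightarrow> n < length p \<Longrightarrow> simple_path E (drop n p)"
  unfolding simple_path_def by (auto simp: add.commute[of _ n])

lemma simple_path_snoc:
  assumes "simple_path E p" "z \<notin> set p" "{last p, z} \<in> E"
  shows "simple_path E (p @ [z])"
  unfolding simple_path_def
proof (intro conjI allI impI)
  fix i assume i: "Suc i < length (p @ [z])"
  show "{(p @ [z]) ! i, (p @ [z]) ! Suc i} \<in> E"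
  proof (cases "Suc i < length p")
    case True then show ?thesis using simple_path_edge[OF assms(1)] by (simp add: nth_append)
  next
    case False
    then have "i = length p - 1" using i by simp
    then show ?thesis using assms by (simp add: nth_append last_conv_nth simple_path_def)
  qed
qed (use assms in \<open>auto simp: simple_path_def\<close>)

lemma simple_path_Cons:
  assumes "simple_path E p" "z \<notin> set p" "{z, hd p} \<in> E"
  shows "simple_path E (z # p)"
proof -
  have "simple_path E (rev p @ [z])"
    using simple_path_snoc[OF simple_path_rev[OF assms(1)]] assms
    by (simp add: last_rev insert_commute simple_path_def)
  then show ?thesis using simple_path_rev by fastforce
qed

lemma reach_imp_simple_path: "reach E a b \<Longrightarrow> \<exists>p. simple_path E p \<and> hd p = a \<and> last p = b"
proof (induct rule: reach_induct)
  case base then show ?case by (intro exI[of _ "[a]"]) (simp add: simple_path_def)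
next
  case (step y z)
  then obtain p where p: "simple_path E p" "hd p = a" "last p = y" by blast
  show ?case
  proof (cases "z \<in> set p")
    case True
    then obtain k where k: "k < length p" "p ! k = z" by (meson in_set_conv_nth)
    have "simple_path E (take (Suc k) p)" using simple_path_take[OF p(1)] by simp
    moreover have "hd (take (Suc k) p) = a" using p(2) by simp
    moreover have "last (take (Suc k) p) = z" using k by (simp add: take_Suc_conv_app_nth)
    ultimately show ?thesis by blast
  next
    case False
    then show ?thesis using simple_path_snoc[OF p(1) False] p step
      by (intro exI[of _ "p @ [z]"]) (simp add: simple_path_def)
  qed
qed

section \<open>Edge boundaries as cuts\<close>

definition edge_boundary :: "'v set set \<Rightarrow> 'v set \<Rightarrow> 'v set set" where
  "edge_boundary E A = {g \<in> E. \<exists>a b. g = {a, b} \<and> a \<in> A \<and> b \<notin> A}"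

lemma reach_without_edge_boundary:
  "reach (E - edge_boundary E A) s t \<Longrightarrow> s \<in> A \<longleftrightarrow> t \<in> A"
  by (rule reach_closed_set_iff) (auto simp: edge_boundary_def)

lemma card_components_eq_2_iff:
  assumes "x \<in> V" "y \<in> V" "\<not> reach E x y"
  shows "card (components V E) = 2 \<longleftrightarrow> (\<forall>z\<in>V. reach E x z \<or> reach E y z)"
proof -
  define cp where "cp s = {z \<in> V. reach E s z}" for s
  have comps: "components V E = cp ` V" unfolding cp_def components_def by blast
  have cp_eq: "cp s = cp t" if "reach E s t" for s t
    using reach_trans[OF that] reach_trans[OF reach_sym[OF that]] unfolding cp_def by blast
  have in_cp: "z \<in> cp z" if "z \<in> V" for z using that unfolding cp_def by simp
  have "cp x \<noteq> cp y" using in_cp[of y] assms unfolding cp_def by blast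
  show ?thesis
  proof
    assume "card (components V E) = 2"
    moreover have "{cp x, cp y} \<subseteq> components V E" using assms comps by auto
    ultimately have "components V E = {cp x, cp y}"
      using card_subset_eq[of "components V E" "{cp x, cp y}"] \<open>cp x \<noteq> cp y\<close>
      by (metis card_2_iff card.infinite zero_neq_numeral)
    then show "\<forall>z\<in>V. reach E x z \<or> reach E y z" using in_cp unfolding comps cp_def by blast
  next
    assume "\<forall>z\<in>V. reach E x z \<or> reach E y z"
    then have "cp z \<in> {cp x, cp y}" if "z \<in> V" for z
      using that by (auto dest: cp_eq)
    then have "cp ` V = {cp x, cp y}" using assms(1,2) by blast
    then show "card (components V E) = 2" using comps \<open>cp x \<noteq> cp y\<close> by simp
  qed
qed

lemma edge_boundary_is_cut:
  assumes "x \<in> A" "x \<in> V" "y \<notin> A" "y \<in> V"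
  shows "is_cut V E (edge_boundary E A)"
  using assms reach_without_edge_boundary[of E A x y]
  unfolding is_cut_def connected_graph_def edge_boundary_def by blast

lemma is_min_cut_reach_edge_ends:
  assumes min: "is_min_cut V E F" and f: "{a, b} \<in> F" and z: "z \<in> V" and ab: "a \<in> V"
  shows "reach (E - F) a z \<or> reach (E - F) b z"
proof -
  have "F - {{a, b}} \<subset> F" using f by blast
  then have "\<not> is_cut V E (F - {{a, b}})" using min unfolding is_min_cut_def by simp
  moreover have "F \<subseteq> E" using min unfolding is_min_cut_def is_cut_def by blast
  ultimately have "reach (E - (F - {{a, b}})) z a" using z ab unfolding is_cut_def connected_graph_def by blast
  moreover have "E - (F - {{a, b}}) \<subseteq> (E - F) \<union> {{a, b}}" by blast
  ultimately have "reach (E - F) z a \<or> reach (E - F) z b"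
    by (metis reach_removed_edge_cases reach_refl)
  then show ?thesis by (metis reach_sym)
qed

lemma is_min_cut_edge_boundaryI:
  assumes wf: "wf_graph V E" and x: "x \<in> A" "x \<in> V" and y: "y \<notin> A" "y \<in> V"
    and cover: "\<And>z. z \<in> V \<Longrightarrow> reach (E - edge_boundary E A) x z \<or> reach (E - edge_boundary E A) y z"
  shows "is_min_cut V E (edge_boundary E A)"
proof -
  let ?F = "edge_boundary E A"
  have "connected_graph V (E - F')" if "F' \<subset> ?F" for F'
  proof -
    have mono: "reach (E - F') s t" if "reach (E - ?F) s t" for s t
      using reach_mono[OF that] \<open>F' \<subset> ?F\<close> by blast
    obtain a b where f: "{a, b} \<in> ?F" "{a, b} \<notin> F'" and ab: "a \<in> A" "b \<notin> A"
      using \<open>F' \<subset> ?F\<close> unfolding edge_boundary_def by blast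
    have abV: "a \<in> V" "b \<in> V" using wf_graph_edgeD[OF wf, of a b] f unfolding edge_boundary_def by auto
    have "\<not> reach (E - ?F) y a" "\<not> reach (E - ?F) x b"
      using reach_without_edge_boundary[of E A y a] reach_without_edge_boundary[of E A x b]
        x(1) y(1) ab by blast+
    then have "reach (E - ?F) x a" "reach (E - ?F) y b" using cover abV by blast+
    moreover have "{a, b} \<in> E - F'" using f unfolding edge_boundary_def by blast
    ultimately have xy: "reach (E - F') x y"
      by (meson mono reach_step reach_sym reach_trans)
    have "reach (E - F') x z" if "z \<in> V" for z
      using cover[OF that] mono reach_trans[OF xy] by blast
    then show ?thesis unfolding connected_graph_def
      by (metis x(2) empty_iff reach_sym reach_trans)
  qed
  then show ?thesis
    using edge_boundary_is_cut[OF x y, of E] unfolding is_min_cut_def is_cut_def by blast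
qed

lemma is_min_cut_edge_boundary_iff:
  assumes wf: "wf_graph V E" and conn: "connected_graph V E"
    and x: "x \<in> A" "x \<in> V" and y: "y \<notin> A" "y \<in> V"
  shows "is_min_cut V E (edge_boundary E A) \<longleftrightarrow> card (components V (E - edge_boundary E A)) = 2"
proof
  let ?F = "edge_boundary E A"
  assume min: "is_min_cut V E ?F"
  have "?F \<noteq> {}" using edge_boundary_is_cut[OF x y, of E] conn by (auto simp: is_cut_def)
  then obtain a b where f: "{a, b} \<in> ?F" and ab: "a \<in> A" "b \<notin> A"
    unfolding edge_boundary_def by blast
  have abV: "a \<in> V" "b \<in> V" using wf_graph_edgeD[OF wf, of a b] f unfolding edge_boundary_def by auto
  moreover have "\<not> reach (E - ?F) a b" using reach_without_edge_boundary[of E A a b] ab by blast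
  ultimately have "card (components V (E - ?F)) = 2 \<longleftrightarrow> (\<forall>z\<in>V. reach (E - ?F) a z \<or> reach (E - ?F) b z)"
    by (rule card_components_eq_2_iff)
  then show "card (components V (E - ?F)) = 2"
    using is_min_cut_reach_edge_ends[OF min f _ abV(1)] by blast
next
  assume "card (components V (E - edge_boundary E A)) = 2"
  moreover have "\<not> reach (E - edge_boundary E A) x y"
    using reach_without_edge_boundary[of E A x y] x y by blast
  ultimately have "\<forall>z\<in>V. reach (E - edge_boundary E A) x z \<or> reach (E - edge_boundary E A) y z"
    using card_components_eq_2_iff[OF x(2) y(2)] by blast
  then show "is_min_cut V E (edge_boundary E A)" using is_min_cut_edge_boundaryI[OF wf x y] by blast
qed

section \<open>Trees\<close>

lemma tree_not_reach_removed_edge: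
  assumes tree: "is_tree V E" and ab: "{a, b} \<in> E"
  shows "\<not> reach (E - {{a, b}}) a b"
proof
  assume "reach (E - {{a, b}}) a b"
  then obtain p where p: "simple_path (E - {{a, b}}) p" "hd p = a" "last p = b"
    by (metis reach_imp_simple_path)
  have "a \<noteq> b" using wf_graph_edgeD[of V E a b] tree ab unfolding is_tree_def by simp
  have "length p \<noteq> 1"
  proof
    assume "length p = 1"
    then obtain x where "p = [x]" by (metis One_nat_def length_0_conv length_Suc_conv)
    then show False using p \<open>a \<noteq> b\<close> by simp
  qed
  moreover have "length p \<noteq> 2"
  proof
    assume "length p = 2"
    then obtain x y where "p = [x, y]"
      by (metis One_nat_def length_0_conv length_Suc_conv numeral_2_eq_2)
    then show False using simple_path_edge[OF p(1), of 0] p by simp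
  qed
  moreover have "p \<noteq> []" using p(1) by (simp add: simple_path_def)
  ultimately have "3 \<le> length p" by (cases "length p"; cases "length p - 1") auto
  moreover have "is_path E p (hd p) (last p)"
    using simple_path_mono[OF p(1)] by (auto simp: is_path_iff_simple_path)
  moreover have "{last p, hd p} \<in> E" using p ab by (simp add: insert_commute)
  ultimately have "is_cycle E p" unfolding is_cycle_def by blast
  then show False using tree unfolding is_tree_def by blast
qed

lemma connected_single_edge_if_leaves:
  assumes wf: "wf_graph V E" and fin: "finite E" and conn: "connected_graph V E"
    and ab: "{a, b} \<in> E" and deg: "degree E a \<le> 1" "degree E b \<le> 1"
  shows "E = {{a, b}}"
proof -
  have at_ends: "g = {a, b}" if "x \<in> {a, b}" "g \<in> E" "x \<in> g" for x g
  proof -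
    have "card {e \<in> E. x \<in> e} \<le> Suc 0" using that(1) deg unfolding degree_def by auto
    moreover have "finite {e \<in> E. x \<in> e}" using fin by simp
    ultimately have "\<forall>s\<in>{e \<in> E. x \<in> e}. \<forall>t\<in>{e \<in> E. x \<in> e}. s = t"
      using card_le_Suc0_iff_eq by blast
    then show "g = {a, b}" using that ab by auto
  qed
  have V: "z \<in> {a, b}" if "z \<in> V" for z
  proof -
    have "a \<in> V" using wf_graph_edgeD[OF wf ab] by blast
    then have "reach E a z" using conn that unfolding connected_graph_def by blast
    then show ?thesis
    proof (induct rule: reach_induct)
      case (step y z)
      then have "{y, z} = {a, b}" using at_ends by blast
      then show ?case by (auto simp: doubleton_eq_iff)
    qed simp
  qed
  have "g = {a, b}" if g: "g \<in> E" for g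
  proof -
    obtain x y where "g = {x, y}" "x \<in> V" using wf_graph_edgeE[OF wf g] by metis
    then show ?thesis using at_ends[of x g] V g by auto
  qed
  then show ?thesis using ab by blast
qed

lemma is_cycle_drop:
  assumes "simple_path E p" "Suc (Suc i) < length p" "{last p, p ! i} \<in> E"
  shows "is_cycle E (drop i p)"
  using simple_path_drop[OF assms(1), of i] assms
  by (auto simp: is_cycle_def is_path_iff_simple_path hd_drop_conv_nth)

lemma acyclic_simple_path_end_edges:
  assumes acyclic: "\<nexists>c. is_cycle E c" and wf: "wf_graph V E" and E': "E' \<subseteq> E"
    and p: "simple_path E' p" and closed: "\<And>z. {last p, z} \<in> E' \<Longrightarrow> z \<in> set p"
  shows "card {g \<in> E'. last p \<in> g} \<le> 1"
proof -
  let ?n = "length p"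
  have ne: "p \<noteq> []" using p by (simp add: simple_path_def)
  have "{g \<in> E'. last p \<in> g} \<subseteq> {{last p, p ! (?n - 2)}}"
  proof
    fix g assume g: "g \<in> {g \<in> E'. last p \<in> g}"
    then have "g \<in> E'" "last p \<in> g" by auto
    then obtain z where gz: "g = {last p, z}" "z \<noteq> last p"
      using wf_graph_edge_other[OF wf_graph_mono[OF wf E']] by metis
    then have "z \<in> set p" using closed \<open>g \<in> E'\<close> by blast
    then obtain i where i: "i < ?n" "p ! i = z" by (meson in_set_conv_nth)
    have "i \<noteq> ?n - 1" using i gz ne by (auto simp: last_conv_nth)
    moreover have "\<not> Suc (Suc i) < ?n"
    proof
      assume "Suc (Suc i) < ?n"
      moreover have "{last p, p ! i} \<in> E" using \<open>g \<in> E'\<close> E' gz i by auto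
      ultimately have "is_cycle E (drop i p)" using is_cycle_drop simple_path_mono[OF p E'] by blast
      then show False using acyclic by blast
    qed
    ultimately have "i = ?n - 2" using i by linarith
    then show "g \<in> {{last p, p ! (?n - 2)}}" using i gz by simp
  qed
  then have "card {g \<in> E'. last p \<in> g} \<le> card {{last p, p ! (?n - 2)}}" by (intro card_mono) auto
  then show ?thesis by simp
qed

lemma exists_unextendable_simple_path:
  assumes wf: "wf_graph V E" and fin: "finite V" and w: "w \<in> V"
  obtains p where "simple_path E p" "\<forall>z\<in>set p. reach E w z"
    "\<And>z. {last p, z} \<in> E \<Longrightarrow> z \<in> set p" "\<And>z. {hd p, z} \<in> E \<Longrightarrow> z \<in> set p"
proof -
  define Q where "Q p \<longleftrightarrow> simple_path E p \<and> (\<forall>z\<in>set p. reach E w z)" for p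
  have "Q [w]" unfolding Q_def simple_path_def by simp
  moreover have "length p < Suc (card V)" if "Q p" for p
  proof -
    have "set p \<subseteq> V" using that reach_in_vertices[OF wf _ w] unfolding Q_def by blast
    then show ?thesis using that fin card_mono distinct_card unfolding Q_def simple_path_def
      by (metis less_Suc_eq_le)
  qed
  ultimately obtain p where p: "Q p" and longest: "\<And>q. Q q \<Longrightarrow> length q \<le> length p"
    using ex_has_greatest_nat[of Q "[w]" length "Suc (card V)"] by blast
  have ne: "p \<noteq> []" using p unfolding Q_def simple_path_def by simp
  show ?thesis
  proof
    show "simple_path E p" "\<forall>z\<in>set p. reach E w z" using p unfolding Q_def by auto
  next
    fix z assume e: "{last p, z} \<in> E"
    have "reach E w z" using reach_step[OF _ e] p ne unfolding Q_def by simp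
    then show "z \<in> set p"
      using longest[of "p @ [z]"] p simple_path_snoc[of E p z] e unfolding Q_def by fastforce
  next
    fix z assume e: "{hd p, z} \<in> E"
    have "reach E w z" using reach_step[OF _ e] p ne unfolding Q_def by simp
    then show "z \<in> set p"
      using longest[of "z # p"] p simple_path_Cons[of E p z] e unfolding Q_def
      by (fastforce simp: insert_commute)
  qed
qed

lemma degree_le_card_removed:
  "finite E \<Longrightarrow> D \<subseteq> E \<Longrightarrow> degree E x \<le> card {g \<in> D. x \<in> g} + degree (E - D) x"
  unfolding degree_def
  by (rule order_trans[OF card_mono card_Un_le]) (auto intro: finite_subset)

lemma tree_path_end_removed_edges:
  assumes tree: "is_tree V E" and D: "D \<subseteq> E" and p: "simple_path (E - D) p"
    and closed: "\<And>z. {last p, z} \<in> E - D \<Longrightarrow> z \<in> set p" and deg: "3 \<le> degree E (last p)"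
  shows "2 \<le> card {g \<in> D. last p \<in> g}"
proof -
  have wf: "wf_graph V E" and acyclic: "\<nexists>c. is_cycle E c" using tree unfolding is_tree_def by auto
  then have "finite E" using wf_graph_finite_edges tree unfolding is_tree_def by blast
  moreover have "degree (E - D) (last p) \<le> 1"
    using acyclic_simple_path_end_edges[OF acyclic wf Diff_subset p closed] unfolding degree_def .
  ultimately show ?thesis using deg degree_le_card_removed[OF _ D, of "last p"] by linarith
qed

lemma simple_path_closed_end_hd_neq_last:
  assumes wf: "wf_graph V E" and p: "simple_path E p" and g: "g \<in> E" "last p \<in> g"
    and closed: "\<And>z. {last p, z} \<in> E \<Longrightarrow> z \<in> set p"
  shows "hd p \<noteq> last p"
proof
  assume "hd p = last p"
  then have "p = [last p]"
    using p unfolding simple_path_def by (cases p) (auto split: if_split_asm dest!: last_in_set)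
  moreover obtain z where "g = {last p, z}" "z \<noteq> last p" using wf_graph_edge_other[OF wf g] .
  ultimately show False using closed g by (metis empty_iff empty_set set_ConsD)
qed

lemma phylo_tree_reach_leaf:
  assumes ph: "phylo_tree T" and D: "D \<subseteq> snd T" "card D \<le> 2" and w: "w \<in> fst T"
  shows "\<exists>l\<in>leaves T. reach (snd T - D) w l"
proof (rule ccontr)
  assume no_leaf: "\<not> (\<exists>l\<in>leaves T. reach (snd T - D) w l)"
  have tree: "is_tree (fst T) (snd T)" using ph unfolding phylo_tree_def by blast
  then have wf: "wf_graph (fst T) (snd T)" and finV: "finite (fst T)" unfolding is_tree_def by auto
  have finD: "finite D" using D(1) wf_graph_finite_edges[OF wf finV] by (rule finite_subset)
  obtain p where p: "simple_path (snd T - D) p" "\<forall>z\<in>set p. reach (snd T - D) w z"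
    and last_closed: "\<And>z. {last p, z} \<in> snd T - D \<Longrightarrow> z \<in> set p"
    and hd_closed: "\<And>z. {hd p, z} \<in> snd T - D \<Longrightarrow> z \<in> set p"
    using exists_unextendable_simple_path[OF wf_graph_mono[OF wf Diff_subset] finV w] by blast
  have deg: "3 \<le> degree (snd T) z" if "z \<in> set p" for z
    using ph that p(2) no_leaf reach_in_vertices[OF wf_graph_mono[OF wf Diff_subset] _ w]
    unfolding phylo_tree_def by blast
  have ne: "p \<noteq> []" using p(1) unfolding simple_path_def by simp
  have ends_in_D: "2 \<le> card {g \<in> D. x \<in> g}" if "x \<in> {hd p, last p}" for x
    using that tree_path_end_removed_edges[OF tree D(1) p(1) last_closed deg]
      tree_path_end_removed_edges[OF tree D(1) simple_path_rev[OF p(1)]] hd_closed deg ne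
    by (auto simp: last_rev hd_rev)
  have D_ends: "x \<in> g" if "g \<in> D" "x \<in> {hd p, last p}" for g x
  proof -
    have "{g \<in> D. x \<in> g} = D"
      using card_seteq[OF finD, of "{g \<in> D. x \<in> g}"] ends_in_D[OF that(2)] D(2) by auto
    then show ?thesis using that(1) by blast
  qed
  have "\<not> {g \<in> snd T. last p \<in> g} \<subseteq> D"
    using deg[of "last p"] ne card_mono[OF finD, of "{g \<in> snd T. last p \<in> g}"] D(2)
    unfolding degree_def by fastforce
  then obtain g where "g \<in> snd T - D" "last p \<in> g" by blast
  then have "hd p \<noteq> last p"
    using simple_path_closed_end_hd_neq_last[OF wf_graph_mono[OF wf Diff_subset] p(1) _ _ last_closed] by blast
  have "D \<subseteq> {{hd p, last p}}"
  proof
    fix g assume "g \<in> D"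
    then obtain a b where "g = {a, b}" using wf_graph_edgeE[OF wf] D(1) by blast
    then show "g \<in> {{hd p, last p}}"
      using D_ends[OF \<open>g \<in> D\<close>, of "hd p"] D_ends[OF \<open>g \<in> D\<close>, of "last p"] \<open>hd p \<noteq> last p\<close> by auto
  qed
  then have "card D \<le> 1" using card_mono[of "{{hd p, last p}}" D] by simp
  then show False using ends_in_D[of "last p"] card_mono[OF finD, of "{g \<in> D. last p \<in> g}"] by simp
qed

section \<open>Restrictions of a tree\<close>

definition ray :: "'v set set \<Rightarrow> 'v \<Rightarrow> 'v \<Rightarrow> 'v list \<Rightarrow> bool" where
  "ray M u v r \<longleftrightarrow> simple_path M r \<and> 2 \<le> length r \<and> r ! 0 = v \<and> r ! 1 = u \<and>
     (\<forall>w\<in>set r. w \<noteq> hd r \<and> w \<noteq> last r \<longrightarrow> degree M w = 2) \<and> degree M (last r) \<noteq> 2"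

lemma ray_interior_degree:
  assumes "ray M u v r" "0 < k" "k < length r - 1"
  shows "degree M (r ! k) = 2"
proof -
  have d: "distinct r" and ne: "r \<noteq> []" using assms unfolding ray_def simple_path_def by auto
  have "r ! k \<noteq> hd r" using nth_eq_iff_index_eq[OF d, of k 0] assms ne by (auto simp: hd_conv_nth)
  moreover have "r ! k \<noteq> last r" using nth_eq_iff_index_eq[OF d, of k "length r - 1"] assms ne
    by (auto simp: last_conv_nth)
  ultimately show ?thesis using assms unfolding ray_def by simp
qed

lemma degree_2_neighbour_unique:
  assumes "finite M" "degree M w = 2" "{w, a} \<in> M" "{w, b} \<in> M" "{w, c} \<in> M"
    "a \<noteq> w" "b \<noteq> w" "c \<noteq> w" "a \<noteq> b" "a \<noteq> c"
  shows "b = c"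
proof (rule ccontr)
  assume bc: "b \<noteq> c"
  have "card {{w, a}, {w, b}, {w, c}} = 3" using assms bc by (auto simp: doubleton_eq_iff)
  moreover have "{{w, a}, {w, b}, {w, c}} \<subseteq> {e \<in> M. w \<in> e}" using assms by auto
  moreover have "finite {e \<in> M. w \<in> e}" using assms(1) by simp
  ultimately have "3 \<le> card {e \<in> M. w \<in> e}" by (metis card_mono)
  then show False using assms(2) unfolding degree_def by simp
qed

lemma ray_prefix_eq:
  assumes fin: "finite M" and r1: "ray M u v r1" and r2: "ray M u v r2"
    and i: "Suc i < length r1" "Suc i < length r2"
  shows "r1 ! i = r2 ! i \<and> r1 ! Suc i = r2 ! Suc i"
  using i
proof (induct i)
  case 0 then show ?case using r1 r2 unfolding ray_def by simp
next
  case (Suc i)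
  then have ih: "r1 ! i = r2 ! i" "r1 ! Suc i = r2 ! Suc i" by auto
  let ?w = "r1 ! Suc i"
  have p1: "simple_path M r1" and p2: "simple_path M r2" using r1 r2 unfolding ray_def by auto
  have d1: "distinct r1" and d2: "distinct r2" using p1 p2 unfolding simple_path_def by auto
  have "degree M ?w = 2" using ray_interior_degree[OF r1, of "Suc i"] Suc.prems by simp
  moreover have "{?w, r1 ! i} \<in> M" using simple_path_edge[OF p1, of i] Suc.prems by (simp add: insert_commute)
  moreover have "{?w, r1 ! Suc (Suc i)} \<in> M" using simple_path_edge[OF p1, of "Suc i"] Suc.prems by simp
  moreover have "{?w, r2 ! Suc (Suc i)} \<in> M" using simple_path_edge[OF p2, of "Suc i"] Suc.prems ih by simp
  moreover have "r1 ! i \<noteq> ?w" "r1 ! Suc (Suc i) \<noteq> ?w" "r1 ! i \<noteq> r1 ! Suc (Suc i)"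
    using nth_eq_iff_index_eq[OF d1] Suc.prems by simp_all
  moreover have "r2 ! Suc (Suc i) \<noteq> ?w" "r1 ! i \<noteq> r2 ! Suc (Suc i)"
    using nth_eq_iff_index_eq[OF d2] Suc.prems ih by simp_all
  ultimately have "r1 ! Suc (Suc i) = r2 ! Suc (Suc i)" using degree_2_neighbour_unique[OF fin] by blast
  then show ?case using ih by simp
qed

text \<open>A ray is determined by its first edge: it follows the unique continuation through
  degree-two vertices, and it has to stop at the first vertex of another degree.\<close>
lemma ray_unique:
  assumes fin: "finite M" and r1: "ray M u v r1" and r2: "ray M u v r2"
  shows "r1 = r2"
proof -
  have not_shorter: "\<not> length ra < length rb" if ra: "ray M u v ra" and rb: "ray M u v rb" for ra rb
  proof
    assume lt: "length ra < length rb"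
    have la: "2 \<le> length ra" using ra unfolding ray_def by auto
    have "ra ! (length ra - 1) = rb ! (length ra - 1)"
      using ray_prefix_eq[OF fin ra rb, of "length ra - 2"] la lt by (simp add: Suc_diff_Suc numeral_2_eq_2)
    moreover have "degree M (rb ! (length ra - 1)) = 2" using ray_interior_degree[OF rb, of "length ra - 1"] la lt by simp
    moreover have "last ra = ra ! (length ra - 1)" using la by (intro last_conv_nth) auto
    ultimately show False using ra unfolding ray_def by simp
  qed
  have len: "length r1 = length r2" using not_shorter[OF r1 r2] not_shorter[OF r2 r1] by simp
  have "2 \<le> length r1" using r1 unfolding ray_def by auto
  then show ?thesis
  proof (intro nth_equalityI[OF len])
    fix i assume "2 \<le> length r1" "i < length r1"
    then show "r1 ! i = r2 ! i"
      using ray_prefix_eq[OF fin r1 r2, of "i - 1"] ray_prefix_eq[OF fin r1 r2, of 0] len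
      by (cases i) (auto simp: Suc_le_eq)
  qed
qed

lemma ray_of_simple_path:
  assumes p: "simple_path M p" and inner: "\<forall>w\<in>set p. w \<noteq> hd p \<and> w \<noteq> last p \<longrightarrow> degree M w = 2"
    and hd: "degree M (hd p) \<noteq> 2" and j: "Suc j < length p"
  shows "ray M (p ! j) (p ! Suc j) (rev (take (Suc (Suc j)) p))" (is "ray M _ _ ?r")
    and "last (rev (take (Suc (Suc j)) p)) = hd p"
proof -
  have d: "distinct p" and ne: "p \<noteq> []" using p unfolding simple_path_def by auto
  show last: "last ?r = hd p" by (simp add: last_rev)
  have "take (Suc (Suc j)) p = take j p @ [p ! j, p ! Suc j]" using j by (simp add: take_Suc_conv_app_nth)
  then have r: "?r = p ! Suc j # p ! j # rev (take j p)" by simp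
  then have hd_r: "hd ?r = p ! Suc j" by simp
  have "degree M w = 2" if w: "w \<in> set ?r" "w \<noteq> hd ?r" "w \<noteq> last ?r" for w
  proof -
    obtain k where k: "k < Suc (Suc j)" "k < length p" "w = p ! k" using w(1) by (auto simp: in_set_conv_nth)
    have "w \<noteq> last p"
    proof
      assume "w = last p"
      then have "k = length p - 1" using nth_eq_iff_index_eq[OF d, of k "length p - 1"] k ne
        by (auto simp: last_conv_nth)
      then have "k = Suc j" using k(1) j by linarith
      then show False using w(2) k(3) hd_r by simp
    qed
    then show ?thesis using inner w(1,3) last by (auto dest: in_set_takeD)
  qed
  moreover have "simple_path M ?r" using simple_path_rev[OF simple_path_take[OF p]] by simp
  moreover have "2 \<le> length ?r" "?r ! 0 = p ! Suc j" "?r ! 1 = p ! j" using j r by simp_all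
  ultimately show "ray M (p ! j) (p ! Suc j) ?r" unfolding ray_def using hd last by simp
qed

lemma ray_of_simple_path_rev:
  assumes p: "simple_path M p" and inner: "\<forall>w\<in>set p. w \<noteq> hd p \<and> w \<noteq> last p \<longrightarrow> degree M w = 2"
    and last: "degree M (last p) \<noteq> 2" and j: "Suc j < length p"
  obtains r where "ray M (p ! Suc j) (p ! j) r" "last r = last p"
proof -
  define j' where "j' = length p - 2 - j"
  have j': "Suc j' < length (rev p)" and idx: "rev p ! j' = p ! Suc j" "rev p ! Suc j' = p ! j"
    using j by (auto simp: j'_def rev_nth Suc_diff_Suc)
  have "\<forall>w\<in>set (rev p). w \<noteq> hd (rev p) \<and> w \<noteq> last (rev p) \<longrightarrow> degree M w = 2"
    using inner by (simp add: hd_rev last_rev)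
  moreover have "degree M (hd (rev p)) \<noteq> 2" using last by (simp add: hd_rev)
  ultimately show ?thesis
    using ray_of_simple_path[OF simple_path_rev[OF p] _ _ j'] that unfolding idx by (metis hd_rev)
qed

lemma min_sub_E_subset: "min_sub_E S X \<subseteq> snd S"
  unfolding min_sub_E_def is_path_def by blast

lemma restrict_V_degree: "x \<in> restrict_V S X \<Longrightarrow> degree (min_sub_E S X) x \<noteq> 2"
  unfolding restrict_V_def by blast

lemma subset_restrict_V:
  assumes "finite (snd S)" "X \<subseteq> leaves S"
  shows "X \<subseteq> restrict_V S X"
proof
  fix x assume x: "x \<in> X"
  have "is_path (snd S) [x] x x" unfolding is_path_def by simp
  then have "x \<in> min_sub_V S X" unfolding min_sub_V_def using x by force
  moreover have "degree (min_sub_E S X) x \<le> degree (snd S) x"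
    unfolding degree_def using min_sub_E_subset[of S X] assms(1) by (intro card_mono) auto
  moreover have "degree (snd S) x \<le> 1" using x assms(2) unfolding leaves_def by auto
  ultimately show "x \<in> restrict_V S X" unfolding restrict_V_def by auto
qed

lemma wf_graph_restrict: "wf_graph (restrict_V S X) (restrict_E S X)"
  unfolding wf_graph_def restrict_E_def by blast

lemma simple_path_crosses_removed_edge:
  assumes p: "simple_path M p" and M: "M \<subseteq> E" and ends: "\<not> reach (E - {e}) (hd p) (last p)"
  obtains j where "Suc j < length p" "{p ! j, p ! Suc j} = e"
proof -
  have "\<exists>j. Suc j < length p \<and> {p ! j, p ! Suc j} = e"
  proof (rule ccontr)
    assume "\<not> ?thesis"
    then have "simple_path (E - {e}) p" using p M unfolding simple_path_def by blast
    then show False using simple_path_reach[of "E - {e}" p] ends by blast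
  qed
  then show ?thesis using that by blast
qed

lemma restrict_E_crossing_rays:
  assumes uv: "e = {u, v}" and g: "{c, d} \<in> restrict_E S X" and crossing: "\<not> reach (snd S - {e}) c d"
  shows "\<exists>ru rv. ray (min_sub_E S X) u v ru \<and> ray (min_sub_E S X) v u rv \<and> {c, d} = {last ru, last rv}"
proof -
  let ?M = "min_sub_E S X"
  obtain a b p where ab: "{c, d} = {a, b}" "a \<in> restrict_V S X" "b \<in> restrict_V S X"
    and p: "simple_path ?M p" "hd p = a" "last p = b"
    and inner: "\<forall>w\<in>set p. w \<noteq> a \<and> w \<noteq> b \<longrightarrow> degree ?M w = 2"
    using g unfolding restrict_E_def is_path_iff_simple_path by blast
  have "\<not> reach (snd S - {e}) (hd p) (last p)" using crossing ab p(2,3) reach_sym by (metis doubleton_eq_iff)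
  then obtain j where j: "Suc j < length p" "{p ! j, p ! Suc j} = e"
    by (rule simple_path_crosses_removed_edge[OF p(1) min_sub_E_subset])
  have inner': "\<forall>w\<in>set p. w \<noteq> hd p \<and> w \<noteq> last p \<longrightarrow> degree ?M w = 2" using inner p by simp
  have ends: "degree ?M (hd p) \<noteq> 2" "degree ?M (last p) \<noteq> 2"
    using restrict_V_degree[OF ab(2)] restrict_V_degree[OF ab(3)] p(2,3) by simp_all
  obtain r1 where r1: "ray ?M (p ! j) (p ! Suc j) r1" "last r1 = a"
    using ray_of_simple_path[OF p(1) inner' ends(1) j(1)] p(2) by blast
  obtain r2 where r2: "ray ?M (p ! Suc j) (p ! j) r2" "last r2 = b"
    using ray_of_simple_path_rev[OF p(1) inner' ends(2) j(1)] p(3) by blast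
  show ?thesis
  proof (cases "p ! j = u")
    case True
    then have "p ! Suc j = v" using j(2) uv by (auto simp: doubleton_eq_iff)
    then show ?thesis using r1 r2 True ab by blast
  next
    case False
    then have "p ! j = v" "p ! Suc j = u" using j(2) uv by (auto simp: doubleton_eq_iff)
    then show ?thesis using r1 r2 ab by (metis insert_commute)
  qed
qed

lemma restrict_E_crossing_unique:
  assumes fin: "finite (snd S)" and uv: "e = {u, v}"
    and g1: "{c1, d1} \<in> restrict_E S X" "\<not> reach (snd S - {e}) c1 d1"
    and g2: "{c2, d2} \<in> restrict_E S X" "\<not> reach (snd S - {e}) c2 d2"
  shows "{c1, d1} = {c2, d2}"
proof -
  have finM: "finite (min_sub_E S X)" using fin min_sub_E_subset finite_subset by metis
  obtain ru1 rv1 where 1: "ray (min_sub_E S X) u v ru1" "ray (min_sub_E S X) v u rv1" "{c1, d1} = {last ru1, last rv1}"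
    using restrict_E_crossing_rays[OF uv g1] by blast
  obtain ru2 rv2 where 2: "ray (min_sub_E S X) u v ru2" "ray (min_sub_E S X) v u rv2" "{c2, d2} = {last ru2, last rv2}"
    using restrict_E_crossing_rays[OF uv g2] by blast
  show ?thesis using ray_unique[OF finM 1(1) 2(1)] ray_unique[OF finM 1(2) 2(2)] 1(3) 2(3) by simp
qed

section \<open>Splits induced by edges\<close>

lemma side_labelsI: "reach (snd T - {f}) s l \<Longrightarrow> l \<in> leaves T \<Longrightarrow> l \<in> side_labels T f s"
  unfolding side_labels_def by blast

lemma side_labelsD: "l \<in> side_labels T f s \<Longrightarrow> reach (snd T - {f}) s l \<and> l \<in> leaves T"
  unfolding side_labels_def by blast

lemma phylo_tree_edge_sides:
  assumes ph: "phylo_tree S" and e: "{u, v} \<in> snd S"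
  shows "side_labels S {u, v} u \<inter> side_labels S {u, v} v = {}"
    and "leaves S \<subseteq> side_labels S {u, v} u \<union> side_labels S {u, v} v"
    and "side_labels S {u, v} u \<noteq> {}" and "side_labels S {u, v} v \<noteq> {}"
proof -
  let ?E = "snd S - {{u, v}}"
  have tree: "is_tree (fst S) (snd S)" using ph unfolding phylo_tree_def by blast
  then have uv: "u \<in> fst S" "v \<in> fst S" using e wf_graph_edgeD unfolding is_tree_def by metis+
  show "side_labels S {u, v} u \<inter> side_labels S {u, v} v = {}"
  proof (rule ccontr)
    assume "\<not> ?thesis"
    then obtain l where "reach ?E u l" "reach ?E v l" unfolding side_labels_def by blast
    then have "reach ?E u v" using reach_trans reach_sym by metis
    then show False using tree_not_reach_removed_edge[OF tree e] by blast
  qed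
  show "leaves S \<subseteq> side_labels S {u, v} u \<union> side_labels S {u, v} v"
  proof
    fix l assume l: "l \<in> leaves S"
    then have "reach (snd S) l u"
      using tree uv unfolding is_tree_def connected_graph_def leaves_def by blast
    then have "reach ?E l u \<or> reach ?E l v"
      using reach_removed_edge_cases[of "snd S" l u ?E u v] by blast
    then show "l \<in> side_labels S {u, v} u \<union> side_labels S {u, v} v"
      using l reach_sym side_labelsI by (metis UnI1 UnI2)
  qed
  have "{{u, v}} \<subseteq> snd S" "card {{u, v}} \<le> 2" using e by auto
  then show "side_labels S {u, v} u \<noteq> {}" "side_labels S {u, v} v \<noteq> {}"
    using phylo_tree_reach_leaf[OF ph _ _ uv(1)] phylo_tree_reach_leaf[OF ph _ _ uv(2)]
    unfolding side_labels_def by blast+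
qed

lemma reach_sides_after_edge_removal:
  assumes cover: "\<And>x. x \<in> L \<Longrightarrow> reach Q x c \<or> reach Q x d"
    and keeps: "\<And>x x'. x \<in> L \<Longrightarrow> x' \<in> L \<Longrightarrow> reach Q x x' \<Longrightarrow> x \<in> X \<Longrightarrow> x' \<in> X"
    and x0: "x0 \<in> L" "x0 \<in> X" "reach Q x0 c" and y0: "y0 \<in> L" "y0 \<notin> X"
  shows "{y \<in> L. reach Q c y} = L \<inter> X" and "{y \<in> L. reach Q d y} = L - X"
proof -
  have c_side: "y \<in> X" if "y \<in> L" "reach Q c y" for y
    using keeps[OF x0(1) that(1) reach_trans[OF x0(3) that(2)] x0(2)] .
  have "\<not> reach Q y0 c" using c_side[OF y0(1)] reach_sym y0(2) by metis
  then have "reach Q d y0" using cover[OF y0(1)] reach_sym by metis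
  then have d_side: "y \<notin> X" if "y \<in> L" "reach Q d y" for y
    using keeps[OF that(1) y0(1) reach_trans[OF reach_sym[OF that(2)] \<open>reach Q d y0\<close>]] y0(2) by blast
  have "reach Q c y \<or> reach Q d y" if "y \<in> L" for y using cover[OF that] reach_sym by metis
  then show "{y \<in> L. reach Q c y} = L \<inter> X" "{y \<in> L. reach Q d y} = L - X"
    using c_side d_side by blast+
qed

lemma reach_sides_of_removed_edge:
  assumes conn: "\<And>x. x \<in> L \<Longrightarrow> reach E x c"
    and keeps: "\<And>x x'. x \<in> L \<Longrightarrow> x' \<in> L \<Longrightarrow> reach (E - {{c, d}}) x x' \<Longrightarrow> x \<in> X \<Longrightarrow> x' \<in> X"
    and x0: "x0 \<in> L" "x0 \<in> X" and y0: "y0 \<in> L" "y0 \<notin> X"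
  obtains c1 d1 where "{c1, d1} = {c, d}"
    "{y \<in> L. reach (E - {{c, d}}) c1 y} = L \<inter> X" "{y \<in> L. reach (E - {{c, d}}) d1 y} = L - X"
proof -
  let ?Q = "E - {{c, d}}"
  have cover: "reach ?Q x c \<or> reach ?Q x d" if "x \<in> L" for x
    using reach_removed_edge_cases[OF conn[OF that], of ?Q c d] by blast
  show ?thesis
  proof (cases "reach ?Q x0 c")
    case True
    show ?thesis by (rule that[OF refl reach_sides_after_edge_removal[OF cover keeps x0 True y0]])
  next
    case False
    then have x0d: "reach ?Q x0 d" using cover[OF x0(1)] by blast
    have cover': "reach ?Q x d \<or> reach ?Q x c" if "x \<in> L" for x using cover[OF that] by blast
    show ?thesis by (rule that[OF insert_commute reach_sides_after_edge_removal[OF cover' keeps x0 x0d y0]])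
  qed
qed

lemma bij_betw_remove_edge:
  assumes bij: "bij_betw \<phi> V W" and edges: "\<forall>a\<in>V. \<forall>b\<in>V. {a, b} \<in> EV \<longleftrightarrow> {\<phi> a, \<phi> b} \<in> EW"
    and cd: "c \<in> V" "d \<in> V"
  shows "\<forall>a\<in>V. \<forall>b\<in>V. {a, b} \<in> EV - {{c, d}} \<longleftrightarrow> {\<phi> a, \<phi> b} \<in> EW - {{\<phi> c, \<phi> d}}"
proof (intro ballI)
  fix a b assume ab: "a \<in> V" "b \<in> V"
  have "\<phi> ` {a, b} = \<phi> ` {c, d} \<longleftrightarrow> {a, b} = {c, d}"
    using bij ab cd unfolding bij_betw_def by (intro inj_on_image_eq_iff) auto
  then show "{a, b} \<in> EV - {{c, d}} \<longleftrightarrow> {\<phi> a, \<phi> b} \<in> EW - {{\<phi> c, \<phi> d}}"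
    using edges ab by auto
qed

lemma side_labels_bij_betw:
  assumes bij: "bij_betw \<phi> V (fst T)" and wf: "wf_graph V E" and wfT: "wf_graph (fst T) (snd T)"
    and edges: "\<forall>a\<in>V. \<forall>b\<in>V. {a, b} \<in> E \<longleftrightarrow> {\<phi> a, \<phi> b} \<in> snd T"
    and L: "leaves T \<subseteq> V" "\<forall>x\<in>leaves T. \<phi> x = x"
    and cd: "c \<in> V" "d \<in> V" and z: "z \<in> V"
  shows "side_labels T {\<phi> c, \<phi> d} (\<phi> z) = {y \<in> leaves T. reach (E - {{c, d}}) z y}"
proof -
  have "reach (E - {{c, d}}) z y \<longleftrightarrow> reach (snd T - {{\<phi> c, \<phi> d}}) (\<phi> z) y" if "y \<in> leaves T" for y
    using reach_bij_betw_iff[OF bij wf_graph_mono[OF wf] wf_graph_mono[OF wfT]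
        bij_betw_remove_edge[OF bij edges cd] z, of y] L that by auto
  then show ?thesis unfolding side_labels_def by blast
qed

lemma restrict_E_crossing_edge:
  assumes fin: "finite (snd S)" and xy: "reach (restrict_E S X) x y" "\<not> reach (snd S - {{u, v}}) x y"
  obtains c d where "{c, d} \<in> restrict_E S X" "\<not> reach (snd S - {{u, v}}) c d"
    "\<And>c' d'. {c', d'} \<in> restrict_E S X - {{c, d}} \<Longrightarrow> reach (snd S - {{u, v}}) c' d'"
proof -
  have "\<exists>c d. {c, d} \<in> restrict_E S X \<and> \<not> reach (snd S - {{u, v}}) c d"
  proof (rule ccontr)
    assume "\<not> ?thesis"
    then have "reach (snd S - {{u, v}}) x y"
      using reach_if_edges_reach[of "restrict_E S X" "snd S - {{u, v}}" x y] xy(1) by blast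
    then show False using xy(2) by blast
  qed
  then obtain c d where cd: "{c, d} \<in> restrict_E S X" "\<not> reach (snd S - {{u, v}}) c d" by blast
  moreover have "reach (snd S - {{u, v}}) c' d'" if "{c', d'} \<in> restrict_E S X - {{c, d}}" for c' d'
    using restrict_E_crossing_unique[OF fin refl _ _ cd, of c' d'] that by blast
  ultimately show ?thesis using that by blast
qed

lemma agrees_reach_restrict_E:
  assumes phT: "phylo_tree T" and ag: "agrees S T"
    and xy: "x \<in> restrict_V S (leaves T)" "y \<in> restrict_V S (leaves T)"
  shows "reach (restrict_E S (leaves T)) x y"
proof -
  obtain \<phi> where bij: "bij_betw \<phi> (restrict_V S (leaves T)) (fst T)"
    and edges: "\<forall>a\<in>restrict_V S (leaves T). \<forall>b\<in>restrict_V S (leaves T).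
      {a, b} \<in> restrict_E S (leaves T) \<longleftrightarrow> {\<phi> a, \<phi> b} \<in> snd T"
    using ag unfolding agrees_def by blast
  have tree: "is_tree (fst T) (snd T)" using phT unfolding phylo_tree_def by blast
  have "\<phi> x \<in> fst T" "\<phi> y \<in> fst T" using bij_betw_apply[OF bij] xy by auto
  then have "reach (snd T) (\<phi> x) (\<phi> y)" using tree unfolding is_tree_def connected_graph_def by blast
  then show ?thesis
    using reach_bij_betw_iff[OF bij wf_graph_restrict _ edges xy] tree unfolding is_tree_def by blast
qed

lemma agreement_crossing_edge:
  assumes phS: "phylo_tree S" and e: "{u, v} \<in> snd S" and phT: "phylo_tree T" and ag: "agrees S T"
    and x0: "x0 \<in> leaves T" "x0 \<in> side_labels S {u, v} u"
    and y0: "y0 \<in> leaves T" "y0 \<in> side_labels S {u, v} v"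
  obtains c d where "{c, d} \<in> restrict_E S (leaves T)"
    "\<And>x x'. x \<in> leaves T \<Longrightarrow> x' \<in> leaves T \<Longrightarrow> reach (restrict_E S (leaves T) - {{c, d}}) x x' \<Longrightarrow>
      x \<in> side_labels S {u, v} u \<Longrightarrow> x' \<in> side_labels S {u, v} u"
proof -
  let ?L = "leaves T" and ?Lu = "side_labels S {u, v} u"
  let ?RV = "restrict_V S ?L" and ?RE = "restrict_E S ?L" and ?SE = "snd S - {{u, v}}"
  have LS: "?L \<subseteq> leaves S" using ag unfolding agrees_def by blast
  have finS: "finite (snd S)" using phS wf_graph_finite_edges unfolding phylo_tree_def is_tree_def by blast
  have LRV: "?L \<subseteq> ?RV" using subset_restrict_V[OF finS LS] .
  have Lu_iff: "x \<in> ?Lu \<longleftrightarrow> x \<in> leaves S \<and> reach ?SE u x" for x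
    unfolding side_labels_def by blast
  have separated: "\<not> reach ?SE x0 y0"
  proof
    assume r: "reach ?SE x0 y0"
    have "reach ?SE u x0" using Lu_iff[of x0] x0(2) by blast
    then have "reach ?SE u y0" using r by (rule reach_trans)
    then show False using Lu_iff[of y0] y0 LS phylo_tree_edge_sides(1)[OF phS e] by blast
  qed
  have "reach ?RE x0 y0" using agrees_reach_restrict_E[OF phT ag] LRV x0(1) y0(1) by blast
  then obtain c d where cd: "{c, d} \<in> ?RE" "\<not> reach ?SE c d"
    and others: "\<And>c' d'. {c', d'} \<in> ?RE - {{c, d}} \<Longrightarrow> reach ?SE c' d'"
    by (rule restrict_E_crossing_edge[OF finS _ separated]) (rule that)
  have keeps: "x' \<in> ?Lu" if "x \<in> ?L" "x' \<in> ?L" "reach (?RE - {{c, d}}) x x'" "x \<in> ?Lu" for x x'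
  proof -
    have "reach ?SE u x" using Lu_iff[of x] that(4) by blast
    then have "reach ?SE u x'" using reach_if_edges_reach[OF others that(3)] by (rule reach_trans)
    then show ?thesis using Lu_iff[of x'] that(2) LS by blast
  qed
  show ?thesis by (rule that[OF cd(1) keeps])
qed

lemma agreement_split_edge:
  assumes phS: "phylo_tree S" and e: "{u, v} \<in> snd S" and phT: "phylo_tree T" and ag: "agrees S T"
    and x0: "x0 \<in> leaves T" "x0 \<in> side_labels S {u, v} u"
    and y0: "y0 \<in> leaves T" "y0 \<in> side_labels S {u, v} v"
  shows "\<exists>a b. {a, b} \<in> snd T \<and> side_labels T {a, b} a = leaves T \<inter> side_labels S {u, v} u
              \<and> side_labels T {a, b} b = leaves T \<inter> side_labels S {u, v} v"
proof -
  let ?L = "leaves T" and ?Lu = "side_labels S {u, v} u" and ?Lv = "side_labels S {u, v} v"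
  let ?RV = "restrict_V S ?L" and ?RE = "restrict_E S ?L"
  obtain \<phi> where bij: "bij_betw \<phi> ?RV (fst T)" and phi_fix: "\<forall>x\<in>?L. \<phi> x = x"
    and edges: "\<forall>a\<in>?RV. \<forall>b\<in>?RV. {a, b} \<in> ?RE \<longleftrightarrow> {\<phi> a, \<phi> b} \<in> snd T"
    using ag unfolding agrees_def by blast
  obtain c d where cd: "{c, d} \<in> ?RE"
    and keeps: "\<And>x x'. x \<in> ?L \<Longrightarrow> x' \<in> ?L \<Longrightarrow> reach (?RE - {{c, d}}) x x' \<Longrightarrow> x \<in> ?Lu \<Longrightarrow> x' \<in> ?Lu"
    by (rule agreement_crossing_edge[OF phS e phT ag x0 y0]) (rule that)
  have LRV: "?L \<subseteq> ?RV"
    using subset_restrict_V ag phS wf_graph_finite_edges unfolding agrees_def phylo_tree_def is_tree_def by metis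
  have wfT: "wf_graph (fst T) (snd T)" using phT unfolding phylo_tree_def is_tree_def by blast
  have sides: "?Lu \<inter> ?Lv = {}" "?L - ?Lu = ?L \<inter> ?Lv"
    using phylo_tree_edge_sides(1,2)[OF phS e] ag unfolding agrees_def by auto
  have cdRV: "c \<in> ?RV" "d \<in> ?RV" using wf_graph_edgeD[OF wf_graph_restrict cd] by auto
  have conn_c: "reach ?RE x c" if "x \<in> ?L" for x using agrees_reach_restrict_E[OF phT ag subsetD[OF LRV that] cdRV(1)] .
  have y0_Lu: "y0 \<notin> ?Lu" using y0 sides(1) by blast
  obtain c1 d1 where cd1: "{c1, d1} = {c, d}"
    and side_sets: "{y \<in> ?L. reach (?RE - {{c, d}}) c1 y} = ?L \<inter> ?Lu"
      "{y \<in> ?L. reach (?RE - {{c, d}}) d1 y} = ?L - ?Lu"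
    by (rule reach_sides_of_removed_edge[OF conn_c keeps x0 y0(1) y0_Lu])
  have cd1RV: "c1 \<in> ?RV" "d1 \<in> ?RV" using cd1 cdRV by (auto simp: doubleton_eq_iff)
  have side_T: "side_labels T {\<phi> c1, \<phi> d1} (\<phi> z) = {y \<in> ?L. reach (?RE - {{c, d}}) z y}" if "z \<in> ?RV" for z
    using side_labels_bij_betw[OF bij wf_graph_restrict wfT edges LRV phi_fix cd1RV that] cd1 by simp
  have "{\<phi> c1, \<phi> d1} \<in> snd T" using edges cd cd1 cd1RV by metis
  then show ?thesis using side_T[OF cd1RV(1)] side_T[OF cd1RV(2)] side_sets sides(2) by auto
qed

lemma reach_between_edges:
  assumes "reach E a2 a1"
  obtains w1 w2 w2' where "w1 \<in> {a1, b1}" "{w2, w2'} = {a2, b2}"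
    "reach (E - {{a1, b1}, {a2, b2}}) w1 w2"
proof -
  let ?E1 = "E - {{a1, b1}}" and ?E0 = "E - {{a1, b1}, {a2, b2}}"
  have "reach ?E1 a2 a1 \<or> reach ?E1 a2 b1"
    using reach_removed_edge_cases[OF assms, of ?E1 a1 b1] by blast
  then obtain w1 where w1: "w1 \<in> {a1, b1}" "reach ?E1 w1 a2"
    using reach_sym[of ?E1 a2 a1] reach_sym[of ?E1 a2 b1] by blast
  have "?E1 \<subseteq> ?E0 \<union> {{a2, b2}}" by blast
  then have "reach ?E0 w1 a2 \<or> reach ?E0 w1 b2" using reach_removed_edge_cases[OF w1(2)] by blast
  then show ?thesis
  proof
    assume "reach ?E0 w1 a2"
    then show ?thesis using that[OF w1(1) refl] by blast
  next
    assume "reach ?E0 w1 b2"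
    then show ?thesis using that[OF w1(1) insert_commute] by blast
  qed
qed

lemma phylo_tree_split_edge_unique:
  assumes ph: "phylo_tree T" and f1: "{a1, b1} \<in> snd T" and f2: "{a2, b2} \<in> snd T"
    and s1: "side_labels T {a1, b1} a1 = X" "side_labels T {a1, b1} b1 = Y"
    and s2: "side_labels T {a2, b2} a2 = X" "side_labels T {a2, b2} b2 = Y"
    and XY: "X \<inter> Y = {}"
  shows "{a1, b1} = {a2, b2}"
proof (rule ccontr)
  assume ne: "{a1, b1} \<noteq> {a2, b2}"
  let ?E0 = "snd T - {{a1, b1}, {a2, b2}}"
  let ?E1 = "snd T - {{a1, b1}}" and ?E2 = "snd T - {{a2, b2}}"
  have tree: "is_tree (fst T) (snd T)" using ph unfolding phylo_tree_def by blast
  then have wf: "wf_graph (fst T) (snd T)" unfolding is_tree_def by blast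
  have V: "a1 \<in> fst T" "b1 \<in> fst T" "a2 \<in> fst T" "b2 \<in> fst T"
    using wf_graph_edgeD[OF wf f1] wf_graph_edgeD[OF wf f2] by auto
  have "reach (snd T) a2 a1" using tree V unfolding is_tree_def connected_graph_def by blast
  then obtain w1 w2 w2' where w1: "w1 \<in> {a1, b1}" and w2: "{w2, w2'} = {a2, b2}" "reach ?E0 w1 w2"
    by (rule reach_between_edges)
  have leaf: "\<exists>l\<in>leaves T. reach ?E0 w l" if "w \<in> fst T" for w
    using phylo_tree_reach_leaf[OF ph _ _ that, of "{{a1, b1}, {a2, b2}}"] f1 f2 by (simp add: card_insert_if)
  have "w1 \<in> fst T" "w2' \<in> fst T" using w1 w2(1) V by (auto simp: doubleton_eq_iff)
  then obtain l l' where l: "l \<in> leaves T" "reach ?E0 w1 l" and l': "l' \<in> leaves T" "reach ?E0 w2' l'"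
    using leaf by blast
  have E0_1: "?E0 \<subseteq> ?E1" and E0_2: "?E0 \<subseteq> ?E2" by auto
  have "{w2, w2'} \<in> ?E1" using f2 ne w2(1) by auto
  then have "reach ?E1 w1 l'"
    using reach_trans[OF reach_step[OF reach_mono[OF w2(2) E0_1]] reach_mono[OF l'(2) E0_1]] by blast
  then have "l \<in> side_labels T {a1, b1} w1" "l' \<in> side_labels T {a1, b1} w1"
    using reach_mono[OF l(2) E0_1] l(1) l'(1) unfolding side_labels_def by blast+
  moreover have "reach ?E2 w2 l"
    using reach_mono[OF reach_trans[OF reach_sym[OF w2(2)] l(2)] E0_2] .
  then have "l \<in> side_labels T {a2, b2} w2" "l' \<in> side_labels T {a2, b2} w2'"
    using reach_mono[OF l'(2) E0_2] l(1) l'(1) unfolding side_labels_def by blast+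
  moreover have "side_labels T {a1, b1} w1 = X \<or> side_labels T {a1, b1} w1 = Y" using w1 s1 by auto
  moreover have "side_labels T {a2, b2} w2 = X \<and> side_labels T {a2, b2} w2' = Y \<or>
      side_labels T {a2, b2} w2 = Y \<and> side_labels T {a2, b2} w2' = X"
    using w2(1) s2 by (auto simp: doubleton_eq_iff)
  ultimately show False using XY by blast
qed

section \<open>The cut function\<close>

lemma profile_phylo_tree: "profile P \<Longrightarrow> T \<in> P \<Longrightarrow> phylo_tree T"
  unfolding profile_def by blast

lemma profile_shared_vertex_leaf:
  "profile P \<Longrightarrow> T1 \<in> P \<Longrightarrow> T2 \<in> P \<Longrightarrow> T1 \<noteq> T2 \<Longrightarrow> w \<in> fst T1 \<Longrightarrow> w \<in> fst T2 \<Longrightarrow> w \<in> leaves T1"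
  unfolding profile_def by blast

lemma profile_edge_in_two_trees:
  assumes prof: "profile P" and T: "T1 \<in> P" "T2 \<in> P" "T1 \<noteq> T2" and f: "f \<in> snd T1" "f \<in> snd T2"
  shows "snd T1 = {f}"
proof -
  have tree: "is_tree (fst T1) (snd T1)" using profile_phylo_tree[OF prof T(1)] unfolding phylo_tree_def by blast
  then have wf: "wf_graph (fst T1) (snd T1)" unfolding is_tree_def by blast
  obtain a b where ab: "f = {a, b}" "a \<in> fst T1" "b \<in> fst T1" using wf_graph_edgeE[OF wf f(1)] by metis
  have "a \<in> fst T2" "b \<in> fst T2"
    using ab f(2) wf_graph_edgeD[of "fst T2" "snd T2" a b] profile_phylo_tree[OF prof T(2)]
    unfolding phylo_tree_def is_tree_def by auto
  then have "degree (snd T1) a \<le> 1" "degree (snd T1) b \<le> 1"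
    using profile_shared_vertex_leaf[OF prof T] ab unfolding leaves_def by auto
  then show ?thesis
    using connected_single_edge_if_leaves[OF wf wf_graph_finite_edges[OF wf] _ f(1)[unfolded ab]] tree ab
    unfolding is_tree_def by blast
qed

lemma wf_graph_display_graph:
  assumes "profile P"
  shows "wf_graph (dg_V P) (dg_E P)"
  unfolding wf_graph_def
proof
  fix g assume "g \<in> dg_E P"
  then obtain T where T: "T \<in> P" "g \<in> snd T" unfolding dg_E_def by blast
  have "wf_graph (fst T) (snd T)"
    using profile_phylo_tree[OF assms T(1)] unfolding phylo_tree_def is_tree_def by blast
  then obtain a b where "g = {a, b}" "a \<noteq> b" "a \<in> fst T" "b \<in> fst T"
    using wf_graph_edgeE T(2) by metis
  then show "\<exists>a b. g = {a, b} \<and> a \<noteq> b \<and> a \<in> dg_V P \<and> b \<in> dg_V P"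
    using T(1) unfolding dg_V_def by blast
qed

locale supertree_edge =
  fixes P :: "'v graph set" and S :: "'v graph" and u v :: 'v
  assumes profile: "profile P" and supertree: "agreement_supertree P S" and edge: "{u, v} \<in> snd S"
begin

abbreviation "Lu \<equiv> side_labels S {u, v} u"
abbreviation "Lv \<equiv> side_labels S {u, v} v"
abbreviation "F \<equiv> Psi P S {u, v}"

lemma phylo_S: "phylo_tree S" and leaves_S: "leaves S = labels P" and agrees: "T \<in> P \<Longrightarrow> agrees S T"
  using supertree unfolding agreement_supertree_def by auto

lemma sides: "Lu \<inter> Lv = {}" "leaves S \<subseteq> Lu \<union> Lv" "Lu \<noteq> {}" "Lv \<noteq> {}"
  using phylo_tree_edge_sides[OF phylo_S edge] by auto

lemma input_leaves_sides: "T \<in> P \<Longrightarrow> leaves T \<subseteq> Lu \<union> Lv"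
  using sides(2) leaves_S unfolding labels_def by blast

lemma Psi_memE:
  assumes "f \<in> F"
  obtains T a b where "T \<in> P" "f \<in> snd T" "f = {a, b}" "leaves T \<inter> Lu \<noteq> {}"
    "side_labels T f a = leaves T \<inter> Lu" "side_labels T f b = leaves T \<inter> Lv"
proof -
  obtain T where T: "T \<in> P" "f \<in> snd T" and "\<exists>u' v' a b. {u, v} = {u', v'} \<and> f = {a, b} \<and>
      leaves T \<inter> side_labels S {u, v} u' \<noteq> {} \<and> leaves T \<inter> side_labels S {u, v} v' \<noteq> {} \<and>
      side_labels T f a = leaves T \<inter> side_labels S {u, v} u' \<and>
      side_labels T f b = leaves T \<inter> side_labels S {u, v} v'"
    using assms unfolding Psi_def mem_Collect_eq by blast
  then obtain u' v' a b where uv': "{u, v} = {u', v'}" and ab: "f = {a, b}"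
    "leaves T \<inter> side_labels S {u, v} u' \<noteq> {}" "leaves T \<inter> side_labels S {u, v} v' \<noteq> {}"
    "side_labels T f a = leaves T \<inter> side_labels S {u, v} u'"
    "side_labels T f b = leaves T \<inter> side_labels S {u, v} v'"
    by blast
  from uv' have "u' = u \<and> v' = v \<or> u' = v \<and> v' = u" by (auto simp: doubleton_eq_iff)
  then show ?thesis
  proof
    assume "u' = u \<and> v' = v"
    then show ?thesis using that[OF T] ab by simp
  next
    assume "u' = v \<and> v' = u"
    then show ?thesis using that[OF T, of b a] ab by (simp add: insert_commute)
  qed
qed

lemma split_edge_in_Psi:
  assumes T: "T \<in> P" and l1: "l1 \<in> leaves T" "l1 \<in> Lu" and l2: "l2 \<in> leaves T" "l2 \<in> Lv"
  obtains a b where "{a, b} \<in> F" "side_labels T {a, b} a = leaves T \<inter> Lu"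
proof -
  obtain a b where ab: "{a, b} \<in> snd T" "side_labels T {a, b} a = leaves T \<inter> Lu"
    "side_labels T {a, b} b = leaves T \<inter> Lv"
    using agreement_split_edge[OF phylo_S edge profile_phylo_tree[OF profile T] agrees[OF T] l1 l2] by blast
  then have "{a, b} \<in> F" using T l1 l2 unfolding Psi_def by blast
  then show ?thesis using that ab(2) by blast
qed

lemma same_side_if_reach:
  assumes T: "T \<in> P" and l: "l1 \<in> leaves T" "l2 \<in> leaves T" "reach (snd T - F) l1 l2" "l1 \<in> Lu"
  shows "l2 \<in> Lu"
proof (rule ccontr)
  assume "l2 \<notin> Lu"
  then have "l2 \<in> Lv" using input_leaves_sides[OF T] l(2) by blast
  then obtain a b where f: "{a, b} \<in> F" and side_a: "side_labels T {a, b} a = leaves T \<inter> Lu"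
    by (rule split_edge_in_Psi[OF T l(1,4) l(2)])
  have "reach (snd T - {{a, b}}) a l1" using side_a l(1,4) side_labelsD[of l1 T "{a, b}" a] by blast
  moreover have "reach (snd T - {{a, b}}) l1 l2" using reach_mono[OF l(3), of "snd T - {{a, b}}"] f by blast
  ultimately have "reach (snd T - {{a, b}}) a l2" by (rule reach_trans)
  then have "l2 \<in> side_labels T {a, b} a" using l(2) by (rule side_labelsI)
  then show False using side_a \<open>l2 \<notin> Lu\<close> by blast
qed

lemma Psi_unique_in_tree:
  assumes T: "T \<in> P" and f: "f \<in> snd T" "f \<in> F" and g: "g \<in> snd T" "g \<in> F"
  shows "f = g"
proof -
  obtain T1 a1 b1 where 1: "T1 \<in> P" "f \<in> snd T1" "f = {a1, b1}"
    "side_labels T1 f a1 = leaves T1 \<inter> Lu" "side_labels T1 f b1 = leaves T1 \<inter> Lv"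
    using Psi_memE[OF f(2)] by metis
  obtain T2 a2 b2 where 2: "T2 \<in> P" "g \<in> snd T2" "g = {a2, b2}"
    "side_labels T2 g a2 = leaves T2 \<inter> Lu" "side_labels T2 g b2 = leaves T2 \<inter> Lv"
    using Psi_memE[OF g(2)] by metis
  show ?thesis
  proof (cases "T1 = T \<and> T2 = T")
    case True
    have "(leaves T \<inter> Lu) \<inter> (leaves T \<inter> Lv) = {}" using sides(1) by blast
    then show ?thesis
      using phylo_tree_split_edge_unique[OF profile_phylo_tree[OF profile T], of a1 b1 a2 b2] 1 2 True by simp
  next
    case False
    then have "snd T = {f} \<or> snd T = {g}"
      using profile_edge_in_two_trees[OF profile T 1(1) _ f(1) 1(2)]
        profile_edge_in_two_trees[OF profile T 2(1) _ g(1) 2(2)] by metis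
    then show ?thesis using f(1) g(1) by blast
  qed
qed

lemma edges_without_Psi: "T \<in> P \<Longrightarrow> f \<in> snd T \<Longrightarrow> f \<in> F \<Longrightarrow> snd T - F = snd T - {f}"
  using Psi_unique_in_tree by blast

definition u_part :: "'v set" where
  "u_part = {w. \<exists>T\<in>P. w \<in> fst T \<and> (\<exists>l\<in>leaves T \<inter> Lu. reach (snd T - F) w l)}"

text \<open>Vertices shared by two input trees are leaves of both, which makes membership in
  \<open>u_part\<close> independent of the input tree used to test it.\<close>
lemma u_part_iff:
  assumes T: "T \<in> P" "w \<in> fst T"
  shows "w \<in> u_part \<longleftrightarrow> (\<exists>l\<in>leaves T \<inter> Lu. reach (snd T - F) w l)"
proof
  assume "w \<in> u_part"
  then obtain T' l where T': "T' \<in> P" "w \<in> fst T'" "l \<in> leaves T'" "l \<in> Lu" "reach (snd T' - F) w l"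
    unfolding u_part_def by blast
  show "\<exists>l\<in>leaves T \<inter> Lu. reach (snd T - F) w l"
  proof (cases "T' = T")
    case False
    then have "w \<in> leaves T" "w \<in> leaves T'"
      using profile_shared_vertex_leaf[OF profile] T T' by metis+
    moreover have "w \<in> Lu" using same_side_if_reach[OF T'(1,3) _ reach_sym[OF T'(5)] T'(4)] \<open>w \<in> leaves T'\<close> .
    ultimately show ?thesis by (auto intro!: bexI[of _ w])
  qed (use T' in blast)
qed (use T in \<open>auto simp: u_part_def\<close>)

lemma input_tree_wf: "T \<in> P \<Longrightarrow> wf_graph (fst T) (snd T)"
  using profile_phylo_tree[OF profile] unfolding phylo_tree_def is_tree_def by blast

lemma Psi_subset_edge_boundary: "F \<subseteq> edge_boundary (dg_E P) u_part"
proof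
  fix f assume "f \<in> F"
  then obtain T a b where T: "T \<in> P" "f \<in> snd T" "f = {a, b}" "leaves T \<inter> Lu \<noteq> {}"
    "side_labels T f a = leaves T \<inter> Lu" "side_labels T f b = leaves T \<inter> Lv"
    by (rule Psi_memE)
  have without: "snd T - F = snd T - {f}" using edges_without_Psi[OF T(1,2) \<open>f \<in> F\<close>] .
  have ab: "a \<in> fst T" "b \<in> fst T" using wf_graph_edgeD[OF input_tree_wf[OF T(1)], of a b] T(2,3) by auto
  obtain l where "l \<in> leaves T \<inter> Lu" using T(4) by blast
  then have "reach (snd T - F) a l" using T(5) side_labelsD[of l T f a] unfolding without by blast
  then have "a \<in> u_part" using u_part_iff[OF T(1) ab(1)] \<open>l \<in> leaves T \<inter> Lu\<close> by blast
  moreover have "b \<notin> u_part"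
  proof
    assume "b \<in> u_part"
    then obtain l' where "l' \<in> leaves T" "l' \<in> Lu" "reach (snd T - {f}) b l'"
      using u_part_iff[OF T(1) ab(2)] unfolding without by blast
    then have "l' \<in> Lv" using T(6) side_labelsI[of T f b l'] by blast
    then show False using \<open>l' \<in> Lu\<close> sides(1) by blast
  qed
  moreover have "f \<in> dg_E P" using T(1,2) unfolding dg_E_def by blast
  ultimately show "f \<in> edge_boundary (dg_E P) u_part" using T(3) unfolding edge_boundary_def by blast
qed

lemma edge_boundary_subset_Psi: "edge_boundary (dg_E P) u_part \<subseteq> F"
proof
  fix g assume "g \<in> edge_boundary (dg_E P) u_part"
  then obtain T a b where T: "T \<in> P" "{a, b} \<in> snd T" "g = {a, b}" and ab: "a \<in> u_part" "b \<notin> u_part"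
    unfolding edge_boundary_def dg_E_def by blast
  have V: "a \<in> fst T" "b \<in> fst T" using wf_graph_edgeD[OF input_tree_wf[OF T(1)] T(2)] by auto
  obtain l where l: "l \<in> leaves T \<inter> Lu" "reach (snd T - F) a l" using u_part_iff[OF T(1) V(1)] ab(1) by blast
  show "g \<in> F"
  proof (rule ccontr)
    assume "g \<notin> F"
    then have "{b, a} \<in> snd T - F" using T(2,3) by (simp add: insert_commute)
    then have "reach (snd T - F) b l" using reach_trans[OF reach_edge l(2)] by blast
    then show False using u_part_iff[OF T(1) V(2)] ab(2) l(1) by blast
  qed
qed

lemma u_part_proper: "\<exists>x\<in>dg_V P. x \<in> u_part" "\<exists>y\<in>dg_V P. y \<notin> u_part"
proof -
  have label_in_tree: "\<exists>T\<in>P. z \<in> leaves T \<and> z \<in> fst T" if "z \<in> leaves S" for z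
    using that leaves_S unfolding labels_def leaves_def by blast
  obtain x where x: "x \<in> Lu" using sides(3) by blast
  then obtain Tx where Tx: "Tx \<in> P" "x \<in> leaves Tx" "x \<in> fst Tx"
    using label_in_tree[OF conjunct2[OF side_labelsD[OF x]]] by blast
  then have "x \<in> u_part" using u_part_iff[OF Tx(1,3)] x by (auto intro!: bexI[of _ x])
  then show "\<exists>x\<in>dg_V P. x \<in> u_part" using Tx unfolding dg_V_def by blast
  obtain y where y: "y \<in> Lv" using sides(4) by blast
  then obtain Ty where Ty: "Ty \<in> P" "y \<in> leaves Ty" "y \<in> fst Ty"
    using label_in_tree[OF conjunct2[OF side_labelsD[OF y]]] by blast
  have "y \<notin> u_part"
  proof
    assume "y \<in> u_part"
    then obtain l where l: "l \<in> leaves Ty" "l \<in> Lu" "reach (snd Ty - F) y l"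
      using u_part_iff[OF Ty(1,3)] by blast
    have "y \<in> Lu" using same_side_if_reach[OF Ty(1) l(1) Ty(2) reach_sym[OF l(3)] l(2)] .
    then show False using y sides(1) by blast
  qed
  then show "\<exists>y\<in>dg_V P. y \<notin> u_part" using Ty unfolding dg_V_def by blast
qed

end

theorem lemma13:
  fixes P :: "'v graph set" and S :: "'v graph"
  assumes "profile P"
    and "connected_graph (dg_V P) (dg_E P)"
    and "agreement_supertree P S"
  shows "(\<forall>e\<in>snd S. is_cut (dg_V P) (dg_E P) (Psi P S e))
       \<and> (\<forall>e\<in>snd S. is_min_cut (dg_V P) (dg_E P) (Psi P S e) \<longleftrightarrow>
                     card (components (dg_V P) (dg_E P - Psi P S e)) = 2)"
proof -
  have "is_cut (dg_V P) (dg_E P) (Psi P S e) \<and> (is_min_cut (dg_V P) (dg_E P) (Psi P S e) \<longleftrightarrow>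
      card (components (dg_V P) (dg_E P - Psi P S e)) = 2)" if e: "e \<in> snd S" for e
  proof -
    have "wf_graph (fst S) (snd S)"
      using assms(3) unfolding agreement_supertree_def phylo_tree_def is_tree_def by blast
    then obtain u v where uv: "e = {u, v}" using wf_graph_edgeE[OF _ e] by metis
    interpret supertree_edge P S u v using assms(1,3) e uv by unfold_locales auto
    have Psi: "Psi P S e = edge_boundary (dg_E P) u_part"
      using Psi_subset_edge_boundary edge_boundary_subset_Psi uv by blast
    obtain x y where x: "x \<in> dg_V P" "x \<in> u_part" and y: "y \<in> dg_V P" "y \<notin> u_part"
      using u_part_proper by blast
    show ?thesis
      unfolding Psi using edge_boundary_is_cut[OF x(2,1) y(2,1)]
        is_min_cut_edge_boundary_iff[OF wf_graph_display_graph[OF assms(1)] assms(2) x(2,1) y(2,1)] by blast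
  qed
  then show ?thesis by blast
qed

end
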